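(* Let $\mathbf{X},\mathbf{Y}$ be computable metric spaces with $\mathbf{Y}$ compact, and $\mathfrak{A}\subseteq\mathcal{A}(\mathbf{X})$, $\mathfrak{B}\subseteq\mathcal{A}(\mathbf{Y})$. Let computable $H,K$ witness $\mathrm{C}_{\mathbf{X}|\mathfrak{A}}\leq_W\mathrm{C}_{\mathbf{Y}|\mathfrak{B}}$, in the sense that for every $\psi$-name $p$ of a set $A$ in the domain of $\mathrm{C}_{\mathbf{X}|\mathfrak{A}}$, $K(p)$ is a $\psi$-name of a set in the domain of $\mathrm{C}_{\mathbf{Y}|\mathfrak{B}}$, and for every name $q$ of a point of $\psi(K(p))$, $H(\langle p,q\rangle)$ is a name of a point of $A$. Then for every $p\in\operatorname{dom}(\mathrm{C}_{\mathbf{X}|\mathfrak{A}}\psi)$ and every $\varepsilon>0$ there are $n\in\mathbb{N}$ and $\delta>0$ such that for all $q\in X_\varepsilon(\mathfrak{A})\cap B(p,2^{-n})$ we have $\lambda(\psi(K(q)))>\delta$.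
   Context: For a computable metric space $\mathbf{X}$, $\mathcal{A}(\mathbf{X})$ is the space of closed subsets with representation $\psi(p):=X\setminus\bigcup_{i}B_{p(i)}$, where $(B_j)$ is a standard enumeration of open balls with centers in the dense subset and rational radii. $\mathrm{C}_{\mathbf{X}|\mathfrak{A}}$ is closed choice restricted to the non-empty members of $\mathfrak{A}$ (input a closed set, output any point of it); $\operatorname{dom}(\mathrm{C}_{\mathbf{X}|\mathfrak{A}}\psi)$ is the set of $\psi$-names of such sets. Points are named via the Cauchy representation. $B(p,2^{-n})$ is the ball in Baire space $\mathbb{N}^\mathbb{N}$ (standard metric), $B(x,\varepsilon)$ the open ball in $\mathbf{X}$, and $\lambda(A)$ the outer diameter $\sup\{d(x,y)\mid x,y\in A\}$. For $\varepsilon>0$, $X_\varepsilon(\mathfrak{A}) := \overline{\psi^{-1}(\{A\in\mathfrak{A}\mid \forall x\in\mathbf{X}\ \exists B\in\mathfrak{A}\ B\subseteq A\setminus B(x,\varepsilon)\})}\subseteq\mathbb{N}^\mathbb{N}$, where $A$ and $B$ range over non-empty members of $\mathfrak{A}$ and the closure is taken in Baire space. *)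

theory Defs
  imports "HOL-Analysis.Analysis"
begin

text \<open>Baire space is modelled as the type nat => nat; its topology is the
product topology of discrete nat (Function_Topology), i.e. the Baire topology.\<close>

definition pos_rat_enum :: "nat \<Rightarrow> real" where
  "pos_rat_enum k = real (Suc (fst (prod_decode k))) / real (Suc (snd (prod_decode k)))"

definition rat_ball :: "(nat \<Rightarrow> 'a::metric_space) \<Rightarrow> nat \<Rightarrow> 'a set" where
  "rat_ball \<alpha> j = ball (\<alpha> (fst (prod_decode j))) (pos_rat_enum (snd (prod_decode j)))"

definition psi :: "(nat \<Rightarrow> 'a::metric_space) \<Rightarrow> (nat \<Rightarrow> nat) \<Rightarrow> 'a set" where
  "psi \<alpha> p = UNIV - (\<Union>i. rat_ball \<alpha> (p i))"

definition cauchy_names :: "(nat \<Rightarrow> 'a::metric_space) \<Rightarrow> 'a \<Rightarrow> (nat \<Rightarrow> nat) set" where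
  "cauchy_names \<alpha> x = {p. \<forall>i. dist (\<alpha> (p i)) x \<le> (1/2) ^ i}"

text \<open>Computable metric space data (topological part): a dense sequence.\<close>
definition dense_seq :: "(nat \<Rightarrow> 'a::metric_space) \<Rightarrow> bool" where
  "dense_seq \<alpha> \<longleftrightarrow> closure (range \<alpha>) = UNIV"

definition dom_choice :: "(nat \<Rightarrow> 'a::metric_space) \<Rightarrow> 'a set set \<Rightarrow> (nat \<Rightarrow> nat) set" where
  "dom_choice \<alpha> \<AA> = {p. psi \<alpha> p \<in> \<AA> \<and> psi \<alpha> p \<noteq> {}}"

definition baire_dist :: "(nat \<Rightarrow> nat) \<Rightarrow> (nat \<Rightarrow> nat) \<Rightarrow> real" where
  "baire_dist p q = (if p = q then 0 else (1/2) ^ (LEAST i. p i \<noteq> q i))"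

definition baire_ball :: "(nat \<Rightarrow> nat) \<Rightarrow> nat \<Rightarrow> (nat \<Rightarrow> nat) set" where
  "baire_ball p n = {q. baire_dist p q < (1/2) ^ n}"

definition X_eps :: "(nat \<Rightarrow> 'a::metric_space) \<Rightarrow> 'a set set \<Rightarrow> real \<Rightarrow> (nat \<Rightarrow> nat) set" where
  "X_eps \<alpha> \<AA> \<epsilon> = closure {p. psi \<alpha> p \<in> \<AA> \<and> psi \<alpha> p \<noteq> {} \<and>
      (\<forall>x. \<exists>B\<in>\<AA>. B \<noteq> {} \<and> B \<subseteq> psi \<alpha> p - ball x \<epsilon>)}"

end

theory Submission
  imports Defs
begin

text \<open>Suppose the sets \<open>\<psi>(K q)\<close> had arbitrarily small diameter for \<open>q \<in> X\<^sub>\<epsilon>(\<AA>)\<close> near \<open>p\<close>.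
Since \<open>Y\<close> is compact, \<open>q \<mapsto> \<psi>(K q)\<close> is upper semicontinuous, so such \<open>q\<close> can be replaced by
nearby names \<open>Q\<^sub>n \<rightarrow> p\<close> of sets \<open>A\<^sub>n\<close> from which every \<open>\<epsilon>\<close>-ball can be removed within \<open>\<AA>\<close>,
with \<open>\<psi>(K Q\<^sub>n)\<close> inside shrinking balls around points \<open>Z\<^sub>n\<close>. A limit point \<open>y\<close> of the \<open>Z\<^sub>n\<close> lies in
\<open>\<psi>(K p)\<close>; fix a name \<open>r\<close> of \<open>y\<close> and let \<open>H(p,r)\<close> name \<open>x\<^sub>0\<close>. By continuity of \<open>H\<close>, reading
long prefixes of \<open>p\<close> and \<open>r\<close> fixes \<open>x\<^sub>0\<close> up to \<open>\<epsilon>\<close>. Now take \<open>B \<in> \<AA>\<close> with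
\<open>B \<subseteq> A\<^sub>n - B(x\<^sub>0,\<epsilon>)\<close> and a name of \<open>B\<close> extending a long prefix of \<open>Q\<^sub>n\<close>: its \<open>K\<close>-image still
lies near \<open>y\<close>, so one of its points has a name extending a long prefix of \<open>r\<close>, and \<open>H\<close> then
produces a point of \<open>B\<close> within \<open>\<epsilon>\<close> of \<open>x\<^sub>0\<close>, which is impossible.\<close>

section \<open>Cylinders in Baire space\<close>

definition cylinder :: "(nat \<Rightarrow> 'a) \<Rightarrow> nat \<Rightarrow> (nat \<Rightarrow> 'a) set" where
  "cylinder p n = {q. \<forall>i<n. q i = p i}"

lemma cylinder_self [simp]: "p \<in> cylinder p n"
  by (simp add: cylinder_def)

lemma cylinder_antimono: "m \<le> n \<Longrightarrow> cylinder p n \<subseteq> cylinder p m"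
  by (auto simp: cylinder_def)

lemma cylinder_eq: "q \<in> cylinder p n \<Longrightarrow> cylinder q n = cylinder p n"
  by (auto simp: cylinder_def)

lemma open_cylinder: "open (cylinder (p :: nat \<Rightarrow> 'a::discrete_topology) n)"
proof -
  have "cylinder p n = (\<Inter>i<n. (\<lambda>q. q i) -` {p i})"
    by (auto simp: cylinder_def)
  moreover have "open ((\<lambda>q::nat \<Rightarrow> 'a. q i) -` {p i})" for i
    by (rule continuous_imp_open_vimage[OF continuous_on_product_coordinates open_UNIV open_discrete])
      simp
  ultimately show ?thesis by auto
qed

lemma open_contains_cylinder:
  assumes "open U" "(p :: nat \<Rightarrow> 'a::discrete_topology) \<in> U"
  obtains n where "cylinder p n \<subseteq> U"
proof -
  have "openin (product_topology (\<lambda>i. euclidean) UNIV) U"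
    using assms(1) open_fun_def by auto
  from product_topology_open_contains_basis[OF this assms(2)]
  obtain X where X: "p \<in> (\<Pi>\<^sub>E i\<in>UNIV. X i)" "finite {i. X i \<noteq> UNIV}" "(\<Pi>\<^sub>E i\<in>UNIV. X i) \<subseteq> U"
    by auto
  obtain n where n: "{i. X i \<noteq> UNIV} \<subseteq> {..<n}"
    using X(2) finite_nat_bounded by blast
  have "cylinder p n \<subseteq> (\<Pi>\<^sub>E i\<in>UNIV. X i)"
  proof
    fix q assume q: "q \<in> cylinder p n"
    have "q i \<in> X i" for i
      using X(1) n q by (cases "i < n") (auto simp: cylinder_def)
    then show "q \<in> (\<Pi>\<^sub>E i\<in>UNIV. X i)" by auto
  qed
  with X(3) that show ?thesis by (meson order.trans)
qed

lemma open_prod_contains_cylinders: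
  fixes p :: "nat \<Rightarrow> 'a::discrete_topology" and r :: "nat \<Rightarrow> 'b::discrete_topology"
  assumes "open U" "(p, r) \<in> U"
  obtains n where "cylinder p n \<times> cylinder r n \<subseteq> U"
proof -
  obtain V W where VW: "open V" "open W" "(p, r) \<in> V \<times> W" "V \<times> W \<subseteq> U"
    using open_prod_elim[OF assms] .
  then have "p \<in> V" "r \<in> W" by auto
  obtain m where m: "cylinder p m \<subseteq> V"
    using open_contains_cylinder[OF VW(1) \<open>p \<in> V\<close>] .
  obtain m' where m': "cylinder r m' \<subseteq> W"
    using open_contains_cylinder[OF VW(2) \<open>r \<in> W\<close>] .
  have "cylinder p (max m m') \<times> cylinder r (max m m') \<subseteq> V \<times> W"
    using m m' cylinder_antimono[OF max.cobounded1, of p m m'] cylinder_antimono[OF max.cobounded2, of r m m']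
    by auto
  with VW(4) that show ?thesis by (meson order.trans)
qed

lemma closure_meets_cylinder:
  assumes "(p :: nat \<Rightarrow> 'a::discrete_topology) \<in> closure S"
  shows "S \<inter> cylinder p n \<noteq> {}"
  using assms[unfolded closure_iff_nhds_not_empty, rule_format, OF order_refl open_cylinder cylinder_self] .

lemma tendsto_cylinder:
  assumes "\<And>n. s n \<in> cylinder (p :: nat \<Rightarrow> 'a::discrete_topology) n"
  shows "s \<longlonglongrightarrow> p"
proof (rule topological_tendstoI)
  fix U assume "open U" "p \<in> U"
  then obtain n where n: "cylinder p n \<subseteq> U" by (rule open_contains_cylinder)
  have "s m \<in> U" if "m \<ge> n" for m
    using assms[of m] cylinder_antimono[OF that, of p] n by (meson subsetD)
  then show "eventually (\<lambda>m. s m \<in> U) sequentially"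
    unfolding eventually_sequentially by blast
qed

lemma continuous_on_cylinder:
  fixes f :: "'b::topological_space \<Rightarrow> nat \<Rightarrow> 'a::discrete_topology"
  assumes "continuous_on D f" "x \<in> D"
  obtains V where "open V" "x \<in> V" "f ` (V \<inter> D) \<subseteq> cylinder (f x) m"
proof -
  obtain V where V: "open V" "V \<inter> D = f -` cylinder (f x) m \<inter> D"
    using assms(1)[unfolded continuous_on_open_invariant, rule_format, OF open_cylinder] by blast
  have "x \<in> V" using V(2) assms(2) by auto
  moreover have "f ` (V \<inter> D) \<subseteq> cylinder (f x) m" using V(2) by auto
  ultimately show ?thesis using that V(1) by blast
qed

lemma baire_ball_subset_cylinder: "baire_ball p n \<subseteq> cylinder p (Suc n)"
proof
  fix q assume q: "q \<in> baire_ball p n"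
  show "q \<in> cylinder p (Suc n)"
  proof (cases "p = q")
    case False
    then have "(1/2::real) ^ (LEAST i. p i \<noteq> q i) < (1/2) ^ n"
      using q by (simp add: baire_ball_def baire_dist_def)
    then have "n < (LEAST i. p i \<noteq> q i)"
      by (simp add: power_strict_decreasing_iff)
    then have "p i = q i" if "i < Suc n" for i
      using not_less_Least[of i "\<lambda>i. p i \<noteq> q i"] that by simp
    then show ?thesis by (simp add: cylinder_def)
  qed simp
qed

section \<open>The representations of closed sets and of points\<close>

lemma psi_upper_semicontinuous:
  fixes \<beta> :: "nat \<Rightarrow> 'b::metric_space"
  assumes "compact (UNIV :: 'b set)" "open U" "psi \<beta> r \<subseteq> U"
  obtains n where "\<And>r'. r' \<in> cylinder r n \<Longrightarrow> psi \<beta> r' \<subseteq> U"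
proof -
  have "compact (- U)"
    using compact_Int_closed[OF assms(1)] assms(2) by (simp add: closed_Compl)
  moreover have "- U \<subseteq> (\<Union>i. rat_ball \<beta> (r i))"
    using assms(3) by (auto simp: psi_def)
  moreover have "open (rat_ball \<beta> (r i))" for i
    by (simp add: rat_ball_def)
  ultimately obtain F where F: "finite F" "- U \<subseteq> (\<Union>i\<in>F. rat_ball \<beta> (r i))"
    by (metis compactE_image)
  obtain n where n: "F \<subseteq> {..<n}"
    using F(1) finite_nat_bounded by blast
  have "psi \<beta> r' \<subseteq> U" if "r' \<in> cylinder r n" for r'
  proof
    fix x assume x: "x \<in> psi \<beta> r'"
    have "x \<notin> rat_ball \<beta> (r i)" if "i \<in> F" for i
    proof -
      have "r' i = r i" using \<open>r' \<in> cylinder r n\<close> n that by (auto simp: cylinder_def)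
      moreover have "x \<notin> rat_ball \<beta> (r' i)" using x by (simp add: psi_def)
      ultimately show ?thesis by simp
    qed
    then show "x \<in> U" using F(2) by blast
  qed
  then show ?thesis using that by blast
qed

lemma psi_closed_graph:
  assumes "(s \<longlongrightarrow> r) F" "(z \<longlongrightarrow> y) F" "eventually (\<lambda>x. z x \<in> psi \<alpha> (s x)) F" "F \<noteq> bot"
  shows "y \<in> psi \<alpha> r"
proof (rule ccontr)
  assume "y \<notin> psi \<alpha> r"
  then obtain i where i: "y \<in> rat_ball \<alpha> (r i)" by (auto simp: psi_def)
  have "eventually (\<lambda>x. s x \<in> cylinder r (Suc i)) F"
    using assms(1) open_cylinder cylinder_self by (rule topological_tendstoD)
  moreover have "eventually (\<lambda>x. z x \<in> rat_ball \<alpha> (r i)) F"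
    using assms(2) _ i by (rule topological_tendstoD) (simp add: rat_ball_def)
  ultimately have "eventually (\<lambda>x. False) F"
    using assms(3)
  proof eventually_elim
    case (elim x)
    have "s x i = r i" using elim(1) by (simp add: cylinder_def)
    moreover have "z x \<notin> rat_ball \<alpha> (s x i)" using elim(3) by (simp add: psi_def)
    ultimately show False using elim(2) by simp
  qed
  then show False using assms(4) by simp
qed

lemma rat_ball_inside_ball:
  assumes "dense_seq \<alpha>" "e > 0"
  obtains j where "y \<in> rat_ball \<alpha> j" "rat_ball \<alpha> j \<subseteq> ball y e"
proof -
  obtain b :: nat where b: "1 / real (Suc b) < e / 2"
    using assms(2) by (metis half_gt_zero nat_approx_posE)
  define k where "k = prod_encode (0, b)"
  have rk: "pos_rat_enum k = 1 / real (Suc b)"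
    by (simp add: pos_rat_enum_def k_def)
  have "y \<in> closure (range \<alpha>)"
    using assms(1) by (simp add: dense_seq_def)
  moreover have "pos_rat_enum k > 0" by (simp add: rk)
  ultimately obtain i where i: "dist (\<alpha> i) y < pos_rat_enum k"
    unfolding closure_approachable by blast
  define j where "j = prod_encode (i, k)"
  have j: "rat_ball \<alpha> j = ball (\<alpha> i) (pos_rat_enum k)"
    by (simp add: rat_ball_def j_def)
  have "rat_ball \<alpha> j \<subseteq> ball y e"
  proof
    fix x assume "x \<in> rat_ball \<alpha> j"
    then have "dist (\<alpha> i) x < pos_rat_enum k" by (simp add: j)
    moreover have "dist y x \<le> dist (\<alpha> i) y + dist (\<alpha> i) x" by (rule dist_triangle3)
    ultimately show "x \<in> ball y e" using i b rk by simp
  qed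
  moreover have "y \<in> rat_ball \<alpha> j" using i by (simp add: j dist_commute)
  ultimately show ?thesis using that by blast
qed

lemma psi_surj:
  assumes "dense_seq \<alpha>" "closed B" "B \<noteq> UNIV"
  obtains t where "psi \<alpha> t = B"
proof -
  define J where "J = {j. rat_ball \<alpha> j \<inter> B = {}}"
  have "y \<in> (\<Union>j\<in>J. rat_ball \<alpha> j)" if y: "y \<notin> B" for y
  proof -
    obtain e where "e > 0" "ball y e \<subseteq> - B"
      using open_contains_ball_eq[of "- B" y] assms(2) y by (auto simp: open_Compl)
    moreover obtain j where "y \<in> rat_ball \<alpha> j" "rat_ball \<alpha> j \<subseteq> ball y e"
      using rat_ball_inside_ball[OF assms(1) \<open>e > 0\<close>, of y] .
    ultimately show ?thesis by (auto simp: J_def)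
  qed
  then have compl_B: "- B = (\<Union>j\<in>J. rat_ball \<alpha> j)"
    by (auto simp: J_def)
  then have "J \<noteq> {}"
    using assms(3) by auto
  then have "range (from_nat_into J) = J"
    by simp
  then have "(\<Union>i. rat_ball \<alpha> (from_nat_into J i)) = - B"
    unfolding compl_B by (metis image_image)
  then have "psi \<alpha> (from_nat_into J) = B"
    by (simp add: psi_def Compl_eq_Diff_UNIV[symmetric])
  then show ?thesis by (rule that)
qed

lemma psi_name_in_cylinder:
  assumes "dense_seq \<alpha>" "closed B" "B \<noteq> UNIV" "B \<subseteq> psi \<alpha> q"
  obtains s where "s \<in> cylinder q n" "psi \<alpha> s = B"
proof -
  obtain t where t: "psi \<alpha> t = B"
    using psi_surj assms(1-3) .
  define s where "s j = (if j < n then q j else t (j - n))" for j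
  have psi_s: "x \<in> psi \<alpha> s \<longleftrightarrow> (\<forall>j<n. x \<notin> rat_ball \<alpha> (q j)) \<and> x \<in> psi \<alpha> t" for x
  proof
    assume x: "x \<in> psi \<alpha> s"
    then have x_s: "x \<notin> rat_ball \<alpha> (s j)" for j
      by (simp add: psi_def)
    have "x \<notin> rat_ball \<alpha> (q j)" if "j < n" for j
      using x_s[of j] that by (simp add: s_def)
    moreover have "x \<notin> rat_ball \<alpha> (t i)" for i
      using x_s[of "i + n"] by (simp add: s_def)
    ultimately show "(\<forall>j<n. x \<notin> rat_ball \<alpha> (q j)) \<and> x \<in> psi \<alpha> t"
      by (simp add: psi_def)
  qed (auto simp: psi_def s_def)
  have "x \<notin> rat_ball \<alpha> (q j)" if "x \<in> B" for x j
    using assms(4) that by (auto simp: psi_def)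
  then have "psi \<alpha> s = B"
    using psi_s t by blast
  moreover have "s \<in> cylinder q n"
    by (simp add: cylinder_def s_def)
  ultimately show ?thesis using that by blast
qed

text \<open>Strict names leave slack at every precision, so a prefix of a strict name of \<open>y\<close> is also a
prefix of a name of every point close enough to \<open>y\<close>.\<close>

lemma strict_cauchy_name_exists:
  assumes "dense_seq \<beta>"
  obtains r where "\<And>i. dist (\<beta> (r i)) y < (1/2) ^ Suc i"
proof -
  have "y \<in> closure (range \<beta>)"
    using assms by (simp add: dense_seq_def)
  then have "\<forall>i. \<exists>j. dist (\<beta> j) y < (1/2) ^ Suc i"
    unfolding closure_approachable by (simp del: power_Suc)
  then show ?thesis using that by metis
qed

lemma cauchy_namesI_strict:
  assumes "\<And>i. dist (\<beta> (r i)) y < (1/2) ^ Suc i"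
  shows "r \<in> cauchy_names \<beta> y"
proof -
  have "dist (\<beta> (r i)) y \<le> (1/2) ^ i" for i
  proof -
    have "(1/2 :: real) ^ Suc i \<le> (1/2) ^ i"
      by (rule power_decreasing) auto
    then show ?thesis using assms[of i] by linarith
  qed
  then show ?thesis by (simp add: cauchy_names_def)
qed

lemma cauchy_name_in_cylinder:
  assumes "dense_seq \<beta>" "\<And>i. dist (\<beta> (r i)) y < (1/2) ^ Suc i" "dist y y' < (1/2) ^ n"
  obtains r' where "r' \<in> cauchy_names \<beta> y'" "r' \<in> cylinder r n"
proof -
  obtain g where g: "\<And>i. dist (\<beta> (g i)) y' < (1/2) ^ Suc i"
    using strict_cauchy_name_exists[OF assms(1), where y = y'] by blast
  define r' where "r' i = (if i < n then r i else g i)" for i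
  have "dist (\<beta> (r' i)) y' \<le> (1/2) ^ i" for i
  proof (cases "i < n")
    case True
    have "dist (\<beta> (r i)) y' \<le> dist (\<beta> (r i)) y + dist y y'"
      by (rule dist_triangle)
    moreover have "(1/2 :: real) ^ n \<le> (1/2) ^ Suc i"
      using True by (intro power_decreasing) auto
    ultimately show ?thesis
      using True assms(2)[of i] assms(3) by (simp add: r'_def)
  next
    case False
    then show ?thesis
      using cauchy_namesI_strict[of \<beta> g y', OF g] by (simp add: r'_def cauchy_names_def)
  qed
  then have "r' \<in> cauchy_names \<beta> y'"
    by (simp add: cauchy_names_def)
  moreover have "r' \<in> cylinder r n"
    by (simp add: cylinder_def r'_def)
  ultimately show ?thesis by (rule that)
qed

lemma cauchy_names_dist:
  assumes "p \<in> cauchy_names \<alpha> x" "p' \<in> cauchy_names \<alpha> x'" "p k = p' k"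
  shows "dist x x' \<le> 2 * (1/2) ^ k"
proof -
  have "dist x x' \<le> dist (\<alpha> (p k)) x + dist (\<alpha> (p' k)) x'"
    using dist_triangle3[of x x' "\<alpha> (p k)"] assms(3) by simp
  moreover have "dist (\<alpha> (p k)) x \<le> (1/2) ^ k" "dist (\<alpha> (p' k)) x' \<le> (1/2) ^ k"
    using assms(1,2) by (simp_all add: cauchy_names_def)
  ultimately show ?thesis by linarith
qed

section \<open>Reductions between closed choice problems\<close>

definition ball_avoiding_names :: "(nat \<Rightarrow> 'a::metric_space) \<Rightarrow> 'a set set \<Rightarrow> real \<Rightarrow> (nat \<Rightarrow> nat) set" where
  "ball_avoiding_names \<alpha> \<AA> \<epsilon> = {p. psi \<alpha> p \<in> \<AA> \<and> psi \<alpha> p \<noteq> {} \<and>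
      (\<forall>x. \<exists>B\<in>\<AA>. B \<noteq> {} \<and> B \<subseteq> psi \<alpha> p - ball x \<epsilon>)}"

lemma X_eps_eq_closure: "X_eps \<alpha> \<AA> \<epsilon> = closure (ball_avoiding_names \<alpha> \<AA> \<epsilon>)"
  by (simp add: X_eps_def ball_avoiding_names_def)

lemma ball_avoiding_names_subset_dom_choice: "ball_avoiding_names \<alpha> \<AA> \<epsilon> \<subseteq> dom_choice \<alpha> \<AA>"
  by (auto simp: ball_avoiding_names_def dom_choice_def)

locale closed_choice_reduction =
  fixes \<alpha> :: "nat \<Rightarrow> 'a::metric_space" and \<beta> :: "nat \<Rightarrow> 'b::metric_space"
    and \<AA> :: "'a set set"
    and K :: "(nat \<Rightarrow> nat) \<Rightarrow> nat \<Rightarrow> nat" and H :: "(nat \<Rightarrow> nat) \<times> (nat \<Rightarrow> nat) \<Rightarrow> nat \<Rightarrow> nat"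
    and DK :: "(nat \<Rightarrow> nat) set" and DH :: "((nat \<Rightarrow> nat) \<times> (nat \<Rightarrow> nat)) set"
  assumes dense_X: "dense_seq \<alpha>" and dense_Y: "dense_seq \<beta>"
    and Y_compact: "compact (UNIV :: 'b set)"
    and A_closed: "\<And>A. A \<in> \<AA> \<Longrightarrow> closed A"
    and K_dom: "dom_choice \<alpha> \<AA> \<subseteq> DK"
    and K_cont: "continuous_on DK K"
    and K_nonempty: "\<And>p. p \<in> dom_choice \<alpha> \<AA> \<Longrightarrow> psi \<beta> (K p) \<noteq> {}"
    and H_dom: "\<And>p y q. p \<in> dom_choice \<alpha> \<AA> \<Longrightarrow> y \<in> psi \<beta> (K p) \<Longrightarrow> q \<in> cauchy_names \<beta> y
      \<Longrightarrow> (p, q) \<in> DH"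
    and H_cont: "continuous_on DH H"
    and H_red: "\<And>p y q. p \<in> dom_choice \<alpha> \<AA> \<Longrightarrow> y \<in> psi \<beta> (K p) \<Longrightarrow> q \<in> cauchy_names \<beta> y
      \<Longrightarrow> \<exists>x\<in>psi \<alpha> p. H (p, q) \<in> cauchy_names \<alpha> x"
begin

lemma K_image_subset_open_near:
  assumes "q \<in> DK" "open U" "psi \<beta> (K q) \<subseteq> U"
  obtains n where "\<And>s. s \<in> DK \<inter> cylinder q n \<Longrightarrow> psi \<beta> (K s) \<subseteq> U"
proof -
  obtain m where m: "\<And>r. r \<in> cylinder (K q) m \<Longrightarrow> psi \<beta> r \<subseteq> U"
    using psi_upper_semicontinuous[OF Y_compact assms(2,3)] by blast
  obtain V where V: "open V" "q \<in> V" "K ` (V \<inter> DK) \<subseteq> cylinder (K q) m"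
    using continuous_on_cylinder[OF K_cont assms(1)] by blast
  obtain n where n: "cylinder q n \<subseteq> V"
    using open_contains_cylinder[OF V(1,2)] .
  show ?thesis
    by (rule that) (use m V(3) n in blast)
qed

lemma concentrated_names_approximation:
  assumes "q \<in> X_eps \<alpha> \<AA> \<epsilon> \<inter> DK" "diameter (psi \<beta> (K q)) \<le> \<delta>" "\<delta> > 0"
  obtains q' z where "q' \<in> ball_avoiding_names \<alpha> \<AA> \<epsilon> \<inter> cylinder q n" "z \<in> psi \<beta> (K q')"
    "psi \<beta> (K q') \<subseteq> ball z (3 * \<delta>)"
proof -
  define D where "D = psi \<beta> (K q)"
  define U where "U = (\<Union>w\<in>D. ball w \<delta>)"
  have "open U"
    by (simp add: U_def open_UN)
  moreover have "psi \<beta> (K q) \<subseteq> U"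
    using assms(3) by (force simp: U_def D_def)
  ultimately obtain m where m: "\<And>s. s \<in> DK \<inter> cylinder q m \<Longrightarrow> psi \<beta> (K s) \<subseteq> U"
    using K_image_subset_open_near[of q U] assms(1) by blast
  have "ball_avoiding_names \<alpha> \<AA> \<epsilon> \<inter> cylinder q (max m n) \<noteq> {}"
    using assms(1) by (intro closure_meets_cylinder) (simp add: X_eps_eq_closure)
  then obtain q' where q': "q' \<in> ball_avoiding_names \<alpha> \<AA> \<epsilon>" "q' \<in> cylinder q (max m n)"
    by blast
  have q'_dom: "q' \<in> dom_choice \<alpha> \<AA>"
    using q'(1) ball_avoiding_names_subset_dom_choice by blast
  have "q' \<in> DK \<inter> cylinder q m"
    using q'_dom K_dom q'(2) cylinder_antimono[OF max.cobounded1, of q m n] by blast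
  then have q'_U: "psi \<beta> (K q') \<subseteq> U"
    by (rule m)
  obtain z where z: "z \<in> psi \<beta> (K q')"
    using K_nonempty[OF q'_dom] by blast
  have "psi \<beta> (K q') \<subseteq> ball z (3 * \<delta>)"
  proof
    fix y assume y: "y \<in> psi \<beta> (K q')"
    obtain w1 where w1: "w1 \<in> D" "dist w1 y < \<delta>"
      using q'_U y by (auto simp: U_def)
    obtain w2 where w2: "w2 \<in> D" "dist w2 z < \<delta>"
      using q'_U z by (auto simp: U_def)
    have "bounded D"
      using bounded_subset[OF compact_imp_bounded[OF Y_compact]] by simp
    then have "dist w2 w1 \<le> \<delta>"
      using diameter_bounded_bound[OF _ w2(1) w1(1)] assms(2) by (simp add: D_def)
    moreover have "dist z y \<le> dist w2 z + dist w2 w1 + dist w1 y"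
      using dist_triangle3[of z y w2] dist_triangle[of w2 y w1] by linarith
    ultimately show "y \<in> ball z (3 * \<delta>)" using w1(2) w2(2) by simp
  qed
  moreover have "q' \<in> cylinder q n"
    using q'(2) cylinder_antimono[OF max.cobounded2, of q m n] by blast
  ultimately show ?thesis
    using that[of q' z] q'(1) z by blast
qed

lemma ball_avoiding_name_subname:
  assumes "q \<in> ball_avoiding_names \<alpha> \<AA> \<epsilon>" "\<epsilon> > 0"
  obtains s where "s \<in> dom_choice \<alpha> \<AA> \<inter> cylinder q m" "psi \<alpha> s \<inter> ball x \<epsilon> = {}"
proof -
  obtain B where B: "B \<in> \<AA>" "B \<noteq> {}" "B \<subseteq> psi \<alpha> q - ball x \<epsilon>"
    using assms(1) by (auto simp: ball_avoiding_names_def)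
  have "x \<notin> B" "B \<subseteq> psi \<alpha> q"
    using B(3) assms(2) by auto
  then obtain s where s: "s \<in> cylinder q m" "psi \<alpha> s = B"
    using psi_name_in_cylinder[OF dense_X A_closed[OF B(1)]] by blast
  have "s \<in> dom_choice \<alpha> \<AA>"
    using s(2) B(1,2) by (simp add: dom_choice_def)
  moreover have "psi \<alpha> s \<inter> ball x \<epsilon> = {}"
    using s(2) B(3) by blast
  ultimately show ?thesis
    using that s(1) by blast
qed

lemma ball_avoiding_names_not_concentrated:
  assumes "p \<in> dom_choice \<alpha> \<AA>" "\<epsilon> > 0" "y \<in> psi \<beta> (K p)"
  obtains n where
    "\<And>q. q \<in> ball_avoiding_names \<alpha> \<AA> \<epsilon> \<inter> cylinder p n \<Longrightarrow> \<not> psi \<beta> (K q) \<subseteq> ball y ((1/2) ^ n)"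
proof -
  obtain r where r: "\<And>i. dist (\<beta> (r i)) y < (1/2) ^ Suc i"
    using strict_cauchy_name_exists[OF dense_Y, where y = y] by blast
  have r_name: "r \<in> cauchy_names \<beta> y"
    using r by (rule cauchy_namesI_strict)
  obtain x0 where x0: "H (p, r) \<in> cauchy_names \<alpha> x0"
    using H_red[OF assms(1,3) r_name] by blast
  obtain k where k: "(1/2 :: real) ^ k < \<epsilon> / 2"
    using real_arch_pow_inv[of "\<epsilon> / 2" "1/2"] assms(2) by auto
  obtain V where V: "open V" "(p, r) \<in> V" "H ` (V \<inter> DH) \<subseteq> cylinder (H (p, r)) (Suc k)"
    using continuous_on_cylinder[OF H_cont H_dom[OF assms(1,3) r_name]] by blast
  obtain n where n: "cylinder p n \<times> cylinder r n \<subseteq> V"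
    using open_prod_contains_cylinders[OF V(1,2)] .
  have "\<not> psi \<beta> (K q) \<subseteq> ball y ((1/2) ^ n)"
    if q: "q \<in> ball_avoiding_names \<alpha> \<AA> \<epsilon> \<inter> cylinder p n" for q
  proof
    assume concentrated: "psi \<beta> (K q) \<subseteq> ball y ((1/2) ^ n)"
    have "q \<in> DK"
      using q K_dom ball_avoiding_names_subset_dom_choice by blast
    then obtain m where m: "\<And>s. s \<in> DK \<inter> cylinder q m \<Longrightarrow> psi \<beta> (K s) \<subseteq> ball y ((1/2) ^ n)"
      using K_image_subset_open_near[OF _ open_ball concentrated] by blast
    obtain s where s: "s \<in> dom_choice \<alpha> \<AA> \<inter> cylinder q (max m n)" "psi \<alpha> s \<inter> ball x0 \<epsilon> = {}"
      using ball_avoiding_name_subname q assms(2) by blast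
    have s_dom: "s \<in> dom_choice \<alpha> \<AA>" and s_cyl: "s \<in> cylinder q (max m n)"
      using s(1) by auto
    obtain y' where y': "y' \<in> psi \<beta> (K s)"
      using K_nonempty[OF s_dom] by blast
    have "s \<in> DK \<inter> cylinder q m"
      using s_dom K_dom s_cyl cylinder_antimono[OF max.cobounded1, of q m n] by blast
    then have "dist y y' < (1/2) ^ n"
      using m y' by fastforce
    then obtain r' where r': "r' \<in> cauchy_names \<beta> y'" "r' \<in> cylinder r n"
      using cauchy_name_in_cylinder[OF dense_Y r] by blast
    obtain x where x: "x \<in> psi \<alpha> s" "H (s, r') \<in> cauchy_names \<alpha> x"
      using H_red[OF s_dom y' r'(1)] by blast
    have "s \<in> cylinder p n"
      using s_cyl cylinder_antimono[OF max.cobounded2, of q m n] cylinder_eq[of q p n] q by blast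
    then have "(s, r') \<in> V \<inter> DH"
      using n r'(2) H_dom[OF s_dom y' r'(1)] by blast
    then have "H (s, r') \<in> cylinder (H (p, r)) (Suc k)"
      using V(3) by blast
    then have "H (p, r) k = H (s, r') k"
      by (simp add: cylinder_def)
    then have "dist x0 x \<le> 2 * (1/2) ^ k"
      by (rule cauchy_names_dist[OF x0 x(2)])
    then have "dist x0 x < \<epsilon>"
      using k by linarith
    then show False
      using x(1) s(2) by (auto simp: dist_commute)
  qed
  then show ?thesis by (rule that)
qed

lemma concentrated_sequence_impossible:
  assumes "p \<in> dom_choice \<alpha> \<AA>" "\<epsilon> > 0"
    and Q: "\<And>n. Q n \<in> ball_avoiding_names \<alpha> \<AA> \<epsilon> \<inter> cylinder p n"
    and Z: "\<And>n. Z n \<in> psi \<beta> (K (Q n))" "\<And>n. psi \<beta> (K (Q n)) \<subseteq> ball (Z n) (e n)"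
    and e: "e \<longlonglongrightarrow> 0"
  shows False
proof -
  obtain \<sigma> y where \<sigma>: "strict_mono \<sigma>" "(Z \<circ> \<sigma>) \<longlonglongrightarrow> y"
    using seq_compactE[OF compact_imp_seq_compact[OF Y_compact], of Z] by blast
  have Q_DK: "Q n \<in> DK" for n
    using Q[of n] ball_avoiding_names_subset_dom_choice K_dom by blast
  have "Q (\<sigma> n) \<in> cylinder p n" for n
    using Q[of "\<sigma> n"] cylinder_antimono[OF seq_suble[OF \<sigma>(1)], of p n] by blast
  then have "(\<lambda>n. Q (\<sigma> n)) \<longlonglongrightarrow> p"
    by (rule tendsto_cylinder)
  then have "(\<lambda>n. K (Q (\<sigma> n))) \<longlonglongrightarrow> K p"
    by (rule continuous_on_tendsto_compose[OF K_cont]) (use assms(1) K_dom Q_DK in auto)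
  then have "y \<in> psi \<beta> (K p)"
    using \<sigma>(2) by (rule psi_closed_graph) (simp_all add: Z(1))
  then obtain N where N:
    "\<And>q. q \<in> ball_avoiding_names \<alpha> \<AA> \<epsilon> \<inter> cylinder p N \<Longrightarrow> \<not> psi \<beta> (K q) \<subseteq> ball y ((1/2) ^ N)"
    using ball_avoiding_names_not_concentrated[OF assms(1,2)] by blast
  define \<eta> :: real where "\<eta> = (1/2) ^ N / 2"
  have "\<eta> > 0" by (simp add: \<eta>_def)
  have "eventually (\<lambda>n. dist (Z (\<sigma> n)) y < \<eta>) sequentially"
    using tendstoD[OF \<sigma>(2) \<open>\<eta> > 0\<close>] by (simp add: comp_def)
  moreover have "eventually (\<lambda>n. e (\<sigma> n) < \<eta>) sequentially"
    using tendstoD[OF LIMSEQ_subseq_LIMSEQ[OF e \<sigma>(1)] \<open>\<eta> > 0\<close>]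
    by (rule eventually_mono) simp
  moreover have "eventually (\<lambda>n. N \<le> \<sigma> n) sequentially"
    unfolding eventually_sequentially by (meson le_trans seq_suble[OF \<sigma>(1)])
  ultimately have "eventually (\<lambda>n. dist (Z (\<sigma> n)) y < \<eta> \<and> e (\<sigma> n) < \<eta> \<and> N \<le> \<sigma> n) sequentially"
    by (intro eventually_conj)
  then obtain m where m: "dist (Z (\<sigma> m)) y < \<eta>" "e (\<sigma> m) < \<eta>" "N \<le> \<sigma> m"
    using eventually_sequentially by auto
  have "psi \<beta> (K (Q (\<sigma> m))) \<subseteq> ball y ((1/2) ^ N)"
  proof
    fix w assume "w \<in> psi \<beta> (K (Q (\<sigma> m)))"
    then have "dist (Z (\<sigma> m)) w < e (\<sigma> m)"
      using Z(2)[of "\<sigma> m"] by auto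
    moreover have "dist y w \<le> dist (Z (\<sigma> m)) y + dist (Z (\<sigma> m)) w"
      by (rule dist_triangle3)
    ultimately show "w \<in> ball y ((1/2) ^ N)"
      using m(1,2) by (simp add: \<eta>_def)
  qed
  moreover have "Q (\<sigma> m) \<in> ball_avoiding_names \<alpha> \<AA> \<epsilon> \<inter> cylinder p N"
    using Q[of "\<sigma> m"] cylinder_antimono[OF m(3), of p] by blast
  ultimately show False
    using N by blast
qed

theorem diameter_psi_K_bounded_below:
  assumes "p \<in> dom_choice \<alpha> \<AA>" "\<epsilon> > 0"
  shows "\<exists>n. \<exists>\<delta>>0. \<forall>q\<in>X_eps \<alpha> \<AA> \<epsilon> \<inter> baire_ball p n \<inter> DK. diameter (psi \<beta> (K q)) > \<delta>"
proof (rule ccontr)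
  define \<delta> :: "nat \<Rightarrow> real" where "\<delta> n = inverse (real (Suc n))" for n
  assume contra: "\<not> ?thesis"
  have "\<exists>q. q \<in> X_eps \<alpha> \<AA> \<epsilon> \<inter> baire_ball p n \<inter> DK \<and> diameter (psi \<beta> (K q)) \<le> \<delta> n" for n
  proof -
    have "\<delta> n > 0" by (simp add: \<delta>_def)
    then have "\<not> (\<forall>q\<in>X_eps \<alpha> \<AA> \<epsilon> \<inter> baire_ball p n \<inter> DK. diameter (psi \<beta> (K q)) > \<delta> n)"
      using contra by blast
    then show ?thesis by (auto simp: not_less)
  qed
  then obtain q where q: "\<And>n. q n \<in> X_eps \<alpha> \<AA> \<epsilon> \<inter> baire_ball p n \<inter> DK \<and> diameter (psi \<beta> (K (q n))) \<le> \<delta> n"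
    by metis
  have "\<exists>q' z. q' \<in> ball_avoiding_names \<alpha> \<AA> \<epsilon> \<inter> cylinder p n \<and> z \<in> psi \<beta> (K q') \<and>
      psi \<beta> (K q') \<subseteq> ball z (3 * \<delta> n)" for n
  proof -
    have "q n \<in> cylinder p n"
      using q[of n] baire_ball_subset_cylinder[of p n] cylinder_antimono[of n "Suc n" p] by auto
    then have "cylinder (q n) n = cylinder p n"
      by (rule cylinder_eq)
    moreover have "\<delta> n > 0" by (simp add: \<delta>_def)
    then obtain q' z where "q' \<in> ball_avoiding_names \<alpha> \<AA> \<epsilon> \<inter> cylinder (q n) n"
      "z \<in> psi \<beta> (K q')" "psi \<beta> (K q') \<subseteq> ball z (3 * \<delta> n)"
      using concentrated_names_approximation[of "q n" \<epsilon> "\<delta> n" n] q[of n] by blast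
    ultimately show ?thesis by auto
  qed
  then obtain Q where "\<And>n. \<exists>z. Q n \<in> ball_avoiding_names \<alpha> \<AA> \<epsilon> \<inter> cylinder p n \<and>
      z \<in> psi \<beta> (K (Q n)) \<and> psi \<beta> (K (Q n)) \<subseteq> ball z (3 * \<delta> n)"
    by metis
  then obtain Z where QZ: "\<And>n. Q n \<in> ball_avoiding_names \<alpha> \<AA> \<epsilon> \<inter> cylinder p n"
    "\<And>n. Z n \<in> psi \<beta> (K (Q n))" "\<And>n. psi \<beta> (K (Q n)) \<subseteq> ball (Z n) (3 * \<delta> n)"
    by metis
  have "(\<lambda>n. 3 * \<delta> n) \<longlonglongrightarrow> 0"
    using tendsto_mult_right_zero[OF LIMSEQ_inverse_real_of_nat] by (simp add: \<delta>_def)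
  then show False
    by (rule concentrated_sequence_impossible[OF assms QZ])
qed

end

theorem lemma19:
  fixes \<alpha> :: "nat \<Rightarrow> 'a::{metric_space, complete_space}"
    and \<beta> :: "nat \<Rightarrow> 'b::metric_space"
    and \<AA> :: "'a set set" and \<BB> :: "'b set set"
    and K :: "(nat \<Rightarrow> nat) \<Rightarrow> (nat \<Rightarrow> nat)"
    and H :: "(nat \<Rightarrow> nat) \<times> (nat \<Rightarrow> nat) \<Rightarrow> (nat \<Rightarrow> nat)"
    and DK :: "(nat \<Rightarrow> nat) set" and DH :: "((nat \<Rightarrow> nat) \<times> (nat \<Rightarrow> nat)) set"
  assumes dense_X: "dense_seq \<alpha>"
    and dense_Y: "dense_seq \<beta>"
    and Y_compact: "compact (UNIV :: 'b set)"
    and A_closed: "\<forall>A\<in>\<AA>. closed A"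
    and B_closed: "\<forall>B\<in>\<BB>. closed B"
    and K_dom: "dom_choice \<alpha> \<AA> \<subseteq> DK"
    and K_cont: "continuous_on DK K"
    and H_dom: "{(p, q). p \<in> dom_choice \<alpha> \<AA> \<and> (\<exists>y\<in>psi \<beta> (K p). q \<in> cauchy_names \<beta> y)} \<subseteq> DH"
    and H_cont: "continuous_on DH H"
    and K_red: "\<forall>p\<in>dom_choice \<alpha> \<AA>. K p \<in> dom_choice \<beta> \<BB>"
    and H_red: "\<forall>p\<in>dom_choice \<alpha> \<AA>. \<forall>y\<in>psi \<beta> (K p). \<forall>q\<in>cauchy_names \<beta> y.
                  \<exists>x\<in>psi \<alpha> p. H (p, q) \<in> cauchy_names \<alpha> x"
  shows "\<forall>p\<in>dom_choice \<alpha> \<AA>. \<forall>\<epsilon>>0. \<exists>n::nat. \<exists>\<delta>>0.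
           \<forall>q\<in>X_eps \<alpha> \<AA> \<epsilon> \<inter> baire_ball p n \<inter> DK. diameter (psi \<beta> (K q)) > \<delta>"
proof -
  interpret closed_choice_reduction \<alpha> \<beta> \<AA> K H DK DH
  proof
    show "psi \<beta> (K p) \<noteq> {}" if "p \<in> dom_choice \<alpha> \<AA>" for p
      using K_red that by (simp add: dom_choice_def)
    show "(p, q) \<in> DH"
      if "p \<in> dom_choice \<alpha> \<AA>" "y \<in> psi \<beta> (K p)" "q \<in> cauchy_names \<beta> y" for p y q
      using H_dom that by blast
    show "\<exists>x\<in>psi \<alpha> p. H (p, q) \<in> cauchy_names \<alpha> x"
      if "p \<in> dom_choice \<alpha> \<AA>" "y \<in> psi \<beta> (K p)" "q \<in> cauchy_names \<beta> y" for p y q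
      using H_red that by blast
  qed (use dense_X dense_Y Y_compact A_closed K_dom K_cont H_cont in simp_all)
  show ?thesis
    using diameter_psi_K_bounded_below by blast
qed

end
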